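(* For integers $m\ge1$, $n\ge2$ and real $\alpha\notin\pi\mathbb{Z}$, $$\sum_{k=0}^{n-1}\cot^m\frac{\alpha+k\pi}{n}=(-1)^{m/2}\,n\,\mathbb{1}_{m\text{ even}}+\frac{1}{(m-1)!}\sum_{k=1}^m n^kA_m^{(k)}P_{k-1}(\cot\alpha).$$
   Context: The arctangent numbers $A_m^{(k)}$ are defined by $\frac{(\arctan z)^k}{k!}=\sum_{m\ge k}\frac{A_m^{(k)}}{m!}z^m$. The derivative polynomials $P_k$ are defined by $P_0(x)=x$, $P_{k+1}(x)=(1+x^2)P_k'(x)$, equivalently $\frac{d^k}{dz^k}\tan z=P_k(\tan z)$. $\mathbb{1}_{m\text{ even}}$ is $1$ if $m$ is even and $0$ otherwise. *)

theory Defs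
  imports "HOL-Analysis.Analysis" "HOL-Computational_Algebra.Polynomial"
begin

text \<open>Arctangent numbers: A m k is m! times the coefficient of z^m in the Taylor
  expansion of (arctan z)^k / k! at 0, i.e. the m-th derivative at 0.\<close>
definition arctan_number :: "nat \<Rightarrow> nat \<Rightarrow> real" where
  "arctan_number m k = (deriv ^^ m) (\<lambda>x. (arctan x) ^ k / fact k) 0"

fun deriv_poly :: "nat \<Rightarrow> real poly" where
  "deriv_poly 0 = [:0, 1:]"
| "deriv_poly (Suc k) = [:1, 0, 1:] * pderiv (deriv_poly k)"

end

theory Submission
  imports Defs
begin

text \<open>
  The arctangent numbers satisfy \<open>A (m+1) (k+1) = A m k - m (m-1) A (m-1) (k+1)\<close>: differentiate
  \<open>(1 + x\<^sup>2) d/dx (arctan x)\<^bsup>k+1\<^esup>/(k+1)! = (arctan x)\<^bsup>k\<^esup>/k!\<close> \<open>m\<close> times at 0 by the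
  Leibniz rule. Since \<open>P\<^sub>k = (1 + x\<^sup>2) P\<^sub>k\<^sub>-\<^sub>1'\<close>, the same recurrence shows by induction on \<open>m\<close> that
  \<open>\<Sum>k=1..m. A m k P\<^sub>k\<^sub>-\<^sub>1(t) = (m-1)! (t\<^sup>m - c\<^sub>m)\<close> with \<open>c\<^sub>m = (-1)\<^bsup>m/2\<^esup>\<close> for even \<open>m\<close> and
  \<open>c\<^sub>m = 0\<close> for odd \<open>m\<close>. Substituting \<open>t = cot \<theta>\<^sub>i\<close>, \<open>\<theta>\<^sub>i = (\<alpha> + i\<pi>)/n\<close>, it remains to show
  \<open>\<Sum>i<n. P\<^sub>j(cot \<theta>\<^sub>i) = n\<^bsup>j+1\<^esup> P\<^sub>j(cot \<alpha>)\<close>. For \<open>j = 0\<close> write \<open>cot \<theta> = \<i> (1 - 2/(1 - e\<^bsup>2\<i>\<theta>\<^esup>))\<close>: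
  the numbers \<open>e\<^bsup>2\<i>\<theta>\<^sub>i\<^esup>\<close> are \<open>w \<zeta>\<^sup>i\<close> for a primitive \<open>n\<close>-th root of unity \<open>\<zeta>\<close>, and the sum is
  evaluated by expanding into geometric series. As \<open>d/dx P\<^sub>j(cot x) = - P\<^sub>j\<^sub>+\<^sub>1(cot x)\<close>,
  the general case follows by differentiating in \<open>\<alpha>\<close>.
\<close>

section \<open>Higher derivatives of real functions\<close>

fun differentiable_upto :: "nat \<Rightarrow> (real \<Rightarrow> real) \<Rightarrow> bool" where
  "differentiable_upto 0 f \<longleftrightarrow> True"
| "differentiable_upto (Suc n) f \<longleftrightarrow> (\<forall>x. DERIV f x :> deriv f x) \<and> differentiable_upto n (deriv f)"

definition smooth :: "(real \<Rightarrow> real) \<Rightarrow> bool" where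
  "smooth f \<longleftrightarrow> (\<forall>n. differentiable_upto n f)"

lemma deriv_eqI: "(\<And>x. DERIV f x :> f' x) \<Longrightarrow> deriv f = f'"
  by (rule ext) (simp add: DERIV_imp_deriv)

lemma deriv_poly_eq_pderiv: "deriv (poly p) = poly (pderiv p)"
  by (intro deriv_eqI) (rule poly_DERIV)

lemma higher_deriv_poly: "(deriv ^^ i) (poly p) = poly ((pderiv ^^ i) p)"
  by (induction i) (simp_all add: deriv_poly_eq_pderiv)

lemma higher_deriv_poly_at_0: "(deriv ^^ i) (poly p) 0 = fact i * coeff p i"
  by (simp add: higher_deriv_poly poly_0_coeff_0 coeff_higher_pderiv pochhammer_fact)

lemma differentiable_upto_SucD: "differentiable_upto (Suc n) f \<Longrightarrow> differentiable_upto n f"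
  by (induction n arbitrary: f) auto

lemma differentiable_upto_DERIV_higher:
  "differentiable_upto n f \<Longrightarrow> j < n \<Longrightarrow> DERIV ((deriv ^^ j) f) x :> (deriv ^^ Suc j) f x"
proof (induction n arbitrary: f j)
  case (Suc n)
  then show ?case
    by (cases j) (auto simp del: funpow.simps simp: funpow_Suc_right)
qed simp

lemma differentiable_upto_add:
  "differentiable_upto n f \<Longrightarrow> differentiable_upto n g \<Longrightarrow> differentiable_upto n (\<lambda>x. f x + g x)"
proof (induction n arbitrary: f g)
  case (Suc n)
  have "deriv (\<lambda>x. f x + g x) = (\<lambda>x. deriv f x + deriv g x)"
    using Suc.prems by (intro deriv_eqI) (auto intro!: derivative_eq_intros)
  with Suc show ?case by (auto intro!: derivative_eq_intros)
qed simp

lemma differentiable_upto_mult: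
  "differentiable_upto n f \<Longrightarrow> differentiable_upto n g \<Longrightarrow> differentiable_upto n (\<lambda>x. f x * g x)"
proof (induction n arbitrary: f g)
  case (Suc n)
  have "deriv (\<lambda>x. f x * g x) = (\<lambda>x. deriv f x * g x + f x * deriv g x)"
    using Suc.prems by (intro deriv_eqI) (auto intro!: derivative_eq_intros)
  moreover have "differentiable_upto n (\<lambda>x. deriv f x * g x + f x * deriv g x)"
    using Suc differentiable_upto_SucD[of n f] differentiable_upto_SucD[of n g]
    by (intro differentiable_upto_add Suc.IH) auto
  ultimately show ?case using Suc.prems by (auto intro!: derivative_eq_intros)
qed simp

lemma differentiable_upto_poly: "differentiable_upto n (poly p)"
  by (induction n arbitrary: p) (simp_all add: deriv_poly_eq_pderiv)

lemma differentiable_upto_const: "differentiable_upto n (\<lambda>x. c)"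
proof -
  have "poly [:c:] = (\<lambda>x. c)" by auto
  then show ?thesis using differentiable_upto_poly[of n "[:c:]"] by simp
qed

lemma differentiable_upto_inverse:
  assumes "smooth h" "\<And>x. h x \<noteq> 0"
  shows "differentiable_upto n (\<lambda>x. inverse (h x))"
proof (induction n)
  case (Suc n)
  have h': "DERIV h x :> deriv h x" for x
    using assms(1) unfolding smooth_def by (metis differentiable_upto.simps(2))
  have D: "DERIV (\<lambda>x. inverse (h x)) x :> (- 1) * deriv h x * (inverse (h x) * inverse (h x))" for x
    using h' assms(2) by (auto intro!: derivative_eq_intros simp: power2_eq_square)
  moreover have "differentiable_upto n (\<lambda>x. (- 1) * deriv h x * (inverse (h x) * inverse (h x)))"
    using assms(1) Suc.IH unfolding smooth_def
    by (intro differentiable_upto_mult differentiable_upto_const) (metis differentiable_upto.simps(2))+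
  ultimately show ?case by (simp only: differentiable_upto.simps deriv_eqI[OF D]) blast
qed simp

lemma sum_binomial_convolution_Suc:
  fixes a b :: "nat \<Rightarrow> 'a::comm_semiring_1"
  shows "(\<Sum>i\<le>Suc n. of_nat (Suc n choose i) * a i * b (Suc n - i))
       = (\<Sum>i\<le>n. of_nat (n choose i) * (a (Suc i) * b (n - i) + a i * b (Suc n - i)))"
proof -
  have "(\<Sum>i\<le>n. of_nat (n choose i) * a i * b (Suc n - i))
      = (\<Sum>i\<le>Suc n. of_nat (n choose i) * a i * b (Suc n - i))"
    by (simp add: binomial_eq_0)
  also have "\<dots> = a 0 * b (Suc n) + (\<Sum>i\<le>n. of_nat (n choose Suc i) * a (Suc i) * b (n - i))"
    by (subst sum.atMost_Suc_shift) simp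
  finally have shifted: "(\<Sum>i\<le>n. of_nat (n choose i) * a i * b (Suc n - i))
      = a 0 * b (Suc n) + (\<Sum>i\<le>n. of_nat (n choose Suc i) * a (Suc i) * b (n - i))" .
  have "(\<Sum>i\<le>Suc n. of_nat (Suc n choose i) * a i * b (Suc n - i))
      = a 0 * b (Suc n) + (\<Sum>i\<le>n. of_nat (Suc n choose Suc i) * a (Suc i) * b (n - i))"
    by (subst sum.atMost_Suc_shift) simp
  also have "\<dots> = a 0 * b (Suc n) + (\<Sum>i\<le>n. of_nat (n choose i) * a (Suc i) * b (n - i))
      + (\<Sum>i\<le>n. of_nat (n choose Suc i) * a (Suc i) * b (n - i))"
    by (simp add: sum.distrib distrib_right add.assoc)
  also have "\<dots> = (\<Sum>i\<le>n. of_nat (n choose i) * a (Suc i) * b (n - i))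
      + (\<Sum>i\<le>n. of_nat (n choose i) * a i * b (Suc n - i))"
    by (simp only: shifted add_ac)
  finally show ?thesis by (simp add: sum.distrib distrib_left mult.assoc)
qed

lemma higher_deriv_mult_real:
  assumes "differentiable_upto n f" "differentiable_upto n g"
  shows "(deriv ^^ n) (\<lambda>x. f x * g x)
       = (\<lambda>x. \<Sum>i\<le>n. of_nat (n choose i) * (deriv ^^ i) f x * (deriv ^^ (n - i)) g x)"
  using assms
proof (induction n)
  case (Suc n)
  have Df: "DERIV ((deriv ^^ i) f) x :> (deriv ^^ Suc i) f x" if "i \<le> n" for i x
    using differentiable_upto_DERIV_higher[OF Suc.prems(1), of i] that by simp
  have Dg: "DERIV ((deriv ^^ (n - i)) g) x :> (deriv ^^ (Suc n - i)) g x" if "i \<le> n" for i x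
    using differentiable_upto_DERIV_higher[OF Suc.prems(2), of "n - i"] that
    by (simp add: Suc_diff_le)
  have IH: "(deriv ^^ n) (\<lambda>x. f x * g x)
      = (\<lambda>x. \<Sum>i\<le>n. of_nat (n choose i) * (deriv ^^ i) f x * (deriv ^^ (n - i)) g x)"
    using Suc differentiable_upto_SucD by blast
  have D: "DERIV (\<lambda>x. \<Sum>i\<le>n. of_nat (n choose i) * (deriv ^^ i) f x * (deriv ^^ (n - i)) g x) x
     :> (\<Sum>i\<le>n. of_nat (n choose i) * ((deriv ^^ Suc i) f x * (deriv ^^ (n - i)) g x
                                     + (deriv ^^ i) f x * (deriv ^^ (Suc n - i)) g x))" for x
    by (rule DERIV_sum) (auto intro!: derivative_eq_intros Df Dg simp: algebra_simps)
  have "(deriv ^^ Suc n) (\<lambda>x. f x * g x)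
      = deriv (\<lambda>x. \<Sum>i\<le>n. of_nat (n choose i) * (deriv ^^ i) f x * (deriv ^^ (n - i)) g x)"
    by (simp add: IH)
  also have "\<dots> = (\<lambda>x. \<Sum>i\<le>n. of_nat (n choose i) * ((deriv ^^ Suc i) f x * (deriv ^^ (n - i)) g x
                                     + (deriv ^^ i) f x * (deriv ^^ (Suc n - i)) g x))"
    by (rule deriv_eqI) (rule D)
  also have "\<dots> = (\<lambda>x. \<Sum>i\<le>Suc n. of_nat (Suc n choose i) * (deriv ^^ i) f x * (deriv ^^ (Suc n - i)) g x)"
    by (intro ext sum_binomial_convolution_Suc
        [where a = "\<lambda>i. (deriv ^^ i) f _" and b = "\<lambda>i. (deriv ^^ i) g _", symmetric])
  finally show ?case .
qed simp

lemma smooth_deriv: "smooth f \<Longrightarrow> smooth (deriv f)"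
  unfolding smooth_def by (metis differentiable_upto.simps(2))

lemma smooth_mult: "smooth f \<Longrightarrow> smooth g \<Longrightarrow> smooth (\<lambda>x. f x * g x)"
  unfolding smooth_def by (blast intro: differentiable_upto_mult)

lemma smooth_const: "smooth (\<lambda>x. c)"
  unfolding smooth_def by (blast intro: differentiable_upto_const)

lemma smooth_poly: "smooth (poly p)"
  unfolding smooth_def by (blast intro: differentiable_upto_poly)

lemma smooth_inverse: "smooth h \<Longrightarrow> (\<And>x. h x \<noteq> 0) \<Longrightarrow> smooth (\<lambda>x. inverse (h x))"
  unfolding smooth_def by (blast intro: differentiable_upto_inverse[unfolded smooth_def])

section \<open>Arctangent numbers\<close>

lemma one_plus_square_eq_poly: "1 + x\<^sup>2 = poly [:1, 0, 1:] (x::real)"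
  by (simp add: power2_eq_square)

lemma smooth_arctan: "smooth arctan"
proof -
  have deriv_arctan: "deriv arctan = (\<lambda>x. inverse (poly [:1, 0, 1:] x))"
    by (intro deriv_eqI) (metis DERIV_arctan one_plus_square_eq_poly)
  have "smooth (\<lambda>x. inverse (poly [:1, 0, 1:] x))"
    by (intro smooth_inverse smooth_poly) (smt (verit) one_plus_square_eq_poly zero_le_power2)
  moreover have "DERIV arctan x :> deriv arctan x" for x
    unfolding deriv_arctan by (metis DERIV_arctan one_plus_square_eq_poly)
  ultimately have "differentiable_upto (Suc n) arctan" for n
    unfolding smooth_def deriv_arctan [symmetric] by simp
  then show ?thesis
    unfolding smooth_def using differentiable_upto_SucD by blast
qed

lemma smooth_arctan_power: "smooth (\<lambda>x. arctan x ^ k / fact k)"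
proof -
  have "smooth (\<lambda>x. arctan x ^ k)"
  proof (induction k)
    case (Suc k)
    then show ?case using smooth_mult[OF smooth_arctan Suc.IH] by simp
  qed (simp add: smooth_const)
  then show ?thesis
    using smooth_mult[OF _ smooth_const, of "\<lambda>x. arctan x ^ k" "1 / fact k"] by simp
qed

lemma DERIV_arctan_power_div_fact:
  "DERIV (\<lambda>x. arctan x ^ Suc k / fact (Suc k)) x :> arctan x ^ k / fact k / (1 + x\<^sup>2)"
proof -
  have "1 + x\<^sup>2 \<noteq> 0"
    by (smt (verit) zero_le_power2)
  then have "real (Suc k) * arctan x ^ k * inverse (1 + x\<^sup>2) / fact (Suc k)
      = arctan x ^ k / fact k / (1 + x\<^sup>2)"
    by (simp add: fact_Suc divide_inverse del: of_nat_Suc)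
  moreover have "DERIV (\<lambda>x. arctan x ^ Suc k / fact (Suc k)) x
      :> real (Suc k) * arctan x ^ k * inverse (1 + x\<^sup>2) / fact (Suc k)"
    using DERIV_cdivide [OF DERIV_chain2 [OF DERIV_pow DERIV_arctan, of "Suc k" x], of "fact (Suc k)"]
    by simp
  ultimately show ?thesis by simp
qed

lemma real_choose_two: "real (m choose 2) * 2 = real m * (real m - 1)"
  by (induction m) (auto simp: numeral_2_eq_2 algebra_simps)

lemma arctan_number_Suc_Suc:
  "arctan_number (Suc m) (Suc k)
     = arctan_number m k - real m * (real m - 1) * arctan_number (m - 1) (Suc k)"
proof -
  \<comment> \<open>Differentiate \<open>(1 + x\<^sup>2) * f' x = arctan x ^ k / fact k\<close> \<open>m\<close> times at \<open>0\<close>;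
    of the derivatives of \<open>1 + x\<^sup>2\<close> only the 0th and the 2nd survive there.\<close>
  define f where "f x = arctan x ^ Suc k / fact (Suc k)" for x
  define D where "D j = (deriv ^^ j) (deriv f) 0" for j
  have deriv_f: "deriv f = (\<lambda>x. arctan x ^ k / fact k / (1 + x\<^sup>2))"
    unfolding f_def by (intro deriv_eqI DERIV_arctan_power_div_fact)
  have "arctan x ^ k / fact k = poly [:1, 0, 1:] x * deriv f x" for x
  proof -
    have "1 + x\<^sup>2 \<noteq> 0"
      by (smt (verit) zero_le_power2)
    then show ?thesis
      unfolding deriv_f one_plus_square_eq_poly [symmetric] by simp
  qed
  then have "arctan_number m k = (deriv ^^ m) (\<lambda>x. poly [:1, 0, 1:] x * deriv f x) 0"
    by (simp add: arctan_number_def)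
  also have "\<dots> = (\<Sum>i\<le>m. real (m choose i) * (fact i * coeff [:1, 0, 1:] i) * D (m - i))"
  proof -
    have "smooth (deriv f)"
      unfolding f_def by (intro smooth_deriv smooth_arctan_power)
    then have "differentiable_upto m (deriv f)"
      unfolding smooth_def by blast
    then show ?thesis
      by (simp only: higher_deriv_mult_real [OF differentiable_upto_poly])
        (simp add: D_def higher_deriv_poly_at_0)
  qed
  also have "\<dots> = (\<Sum>i\<le>m. (if i = 0 then D m else 0)
                      + (if i = 2 then real m * (real m - 1) * D (m - 2) else 0))"
  proof (rule sum.cong [OF refl])
    fix i :: nat
    consider "i = 0" | "i = 1" | "i = 2" | "i > 2" by linarith
    then show "real (m choose i) * (fact i * coeff [:1, 0, 1:] i) * D (m - i)
        = (if i = 0 then D m else 0) + (if i = 2 then real m * (real m - 1) * D (m - 2) else 0)"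
    proof cases
      case 3
      then show ?thesis by (simp add: numeral_2_eq_2 real_choose_two [symmetric])
    next
      case 4
      then have "coeff [:1, 0, 1:] i = (0::real)"
        by (intro coeff_eq_0) simp
      with 4 show ?thesis by simp
    qed simp_all
  qed
  also have "\<dots> = D m + real m * (real m - 1) * D (m - 2)"
    by (simp add: sum.distrib) arith
  also have "D m = arctan_number (Suc m) (Suc k)"
    unfolding D_def f_def arctan_number_def by (simp add: funpow_Suc_right del: funpow.simps)
  also have "real m * (real m - 1) * D (m - 2) = real m * (real m - 1) * arctan_number (m - 1) (Suc k)"
  proof (cases "m \<ge> 2")
    case True
    then have "m - 1 = Suc (m - 2)" by simp
    then show ?thesis
      unfolding D_def f_def arctan_number_def by (simp add: funpow_Suc_right del: funpow.simps)
  qed auto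
  finally show ?thesis by simp
qed

lemma arctan_number_0_left: "arctan_number 0 k = (if k = 0 then 1 else 0)"
  by (simp add: arctan_number_def)

lemma arctan_number_Suc_0: "arctan_number (Suc m) 0 = 0"
proof -
  have "(deriv ^^ m) (\<lambda>x::real. 0::real) = (\<lambda>x. 0)"
    by (induction m) auto
  then show ?thesis
    by (simp add: arctan_number_def funpow_Suc_right del: funpow.simps)
qed

lemma arctan_number_eq_0: "m < k \<Longrightarrow> arctan_number m k = 0"
proof (induction m arbitrary: k rule: less_induct)
  case (less m)
  show ?case
  proof (cases m)
    case 0
    with less.prems show ?thesis by (simp add: arctan_number_0_left)
  next
    case (Suc m')
    moreover obtain k' where "k = Suc k'"
      using less.prems by (cases k) auto
    ultimately show ?thesis
      using less by (simp add: arctan_number_Suc_Suc)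
  qed
qed

section \<open>Powers in terms of derivative polynomials\<close>

(* even_sign m = cos (m * pi / 2) *)
definition even_sign :: "nat \<Rightarrow> real" where
  "even_sign m = (if even m then (- 1) ^ (m div 2) else 0)"

lemma smult_sum_right: "smult c (\<Sum>i\<in>A. f i) = (\<Sum>i\<in>A. smult c (f i))"
  by (induction A rule: infinite_finite_induct) (simp_all add: smult_add_right)

definition arctan_deriv_poly_sum :: "nat \<Rightarrow> real poly" where
  "arctan_deriv_poly_sum m = (\<Sum>j<m. smult (arctan_number m (Suc j)) (deriv_poly j))"

lemma arctan_deriv_poly_sum_upto:
  "m \<le> N \<Longrightarrow> (\<Sum>j<N. smult (arctan_number m (Suc j)) (deriv_poly j)) = arctan_deriv_poly_sum m"
  unfolding arctan_deriv_poly_sum_def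
  by (intro sum.mono_neutral_right) (auto simp: arctan_number_eq_0)

lemma arctan_deriv_poly_sum_Suc:
  assumes "m \<ge> 1"
  shows "arctan_deriv_poly_sum (Suc m)
    = [:1, 0, 1:] * pderiv (arctan_deriv_poly_sum m)
      - smult (real m * (real m - 1)) (arctan_deriv_poly_sum (m - 1))"
proof -
  let ?S = "\<lambda>l N. \<Sum>j<N. smult (arctan_number l (Suc j)) (deriv_poly j)"
  have "arctan_deriv_poly_sum (Suc m)
      = (\<Sum>j<Suc m. smult (arctan_number m j) (deriv_poly j))
        - smult (real m * (real m - 1)) (?S (m - 1) (Suc m))"
    unfolding arctan_deriv_poly_sum_def
    by (simp add: arctan_number_Suc_Suc smult_diff_left sum_subtractf smult_sum_right smult_add_right)
  also have "(\<Sum>j<Suc m. smult (arctan_number m j) (deriv_poly j))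
      = (\<Sum>j<m. smult (arctan_number m (Suc j)) (deriv_poly (Suc j)))"
    using assms arctan_number_Suc_0 [of "m - 1"] by (subst sum.lessThan_Suc_shift) simp
  also have "\<dots> = [:1, 0, 1:] * pderiv (arctan_deriv_poly_sum m)"
    by (simp add: arctan_deriv_poly_sum_def higher_pderiv_sum [where n = 1, simplified] pderiv_smult sum_distrib_left)
  also have "?S (m - 1) (Suc m) = arctan_deriv_poly_sum (m - 1)"
    by (rule arctan_deriv_poly_sum_upto) simp
  finally show ?thesis .
qed

lemma arctan_deriv_poly_sum_Suc_eq:
  "arctan_deriv_poly_sum (Suc m) = smult (fact m) (monom 1 (Suc m) - [:even_sign (Suc m):])"
proof (induction m rule: less_induct)
  case (less m)
  have S1: "arctan_deriv_poly_sum 1 = [:0, 1:]"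
    using arctan_number_Suc_Suc [of 0 0]
    by (simp add: arctan_deriv_poly_sum_def arctan_number_0_left)
  consider "m = 0" | "m = 1" | l where "m = Suc (Suc l)"
    by (metis One_nat_def not0_implies_Suc)
  then show ?case
  proof cases
    case 1
    then show ?thesis
      using S1 by (simp add: even_sign_def monom_Suc)
  next
    case 2
    then have "arctan_deriv_poly_sum (Suc m) = [:1, 0, 1:]"
      using arctan_deriv_poly_sum_Suc [of 1] S1 by (simp add: pderiv_pCons)
    with 2 show ?thesis
      by (intro poly_eq_poly_eq_iff [THEN iffD1] ext)
        (simp add: even_sign_def poly_monom power2_eq_square)
  next
    case (3 l)
    have IH: "arctan_deriv_poly_sum (Suc (Suc l))
        = smult (fact (Suc l)) (monom 1 (Suc (Suc l)) - [:even_sign (Suc (Suc l)):])"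
      "arctan_deriv_poly_sum (Suc l) = smult (fact l) (monom 1 (Suc l) - [:even_sign (Suc l):])"
      using less.IH 3 by simp_all
    have "arctan_deriv_poly_sum (Suc m)
        = [:1, 0, 1:] * pderiv (arctan_deriv_poly_sum (Suc (Suc l)))
          - smult (real (Suc (Suc l)) * real (Suc l)) (arctan_deriv_poly_sum (Suc l))"
      using arctan_deriv_poly_sum_Suc [of "Suc (Suc l)"] 3 by simp
    also have "\<dots> = smult (fact m) (monom 1 (Suc m) - [:even_sign (Suc m):])"
      unfolding IH 3
      by (intro poly_eq_poly_eq_iff [THEN iffD1] ext)
        (simp add: even_sign_def pderiv_smult pderiv_diff pderiv_monom pderiv_pCons poly_monom
          fact_Suc algebra_simps)
    finally show ?thesis .
  qed
qed

lemma power_eq_arctan_deriv_poly_sum: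
  assumes "m \<ge> 1"
  shows "t ^ m = even_sign m
    + (\<Sum>k=1..m. arctan_number m k * poly (deriv_poly (k - 1)) t) / fact (m - 1)"
proof -
  obtain m' where m: "m = Suc m'"
    using assms by (cases m) auto
  have "(\<Sum>k=1..m. arctan_number m k * poly (deriv_poly (k - 1)) t)
      = poly (arctan_deriv_poly_sum m) t"
    by (simp add: arctan_deriv_poly_sum_def poly_sum sum.atLeast1_atMost_eq)
  also have "\<dots> = fact (m - 1) * (t ^ m - even_sign m)"
    by (simp add: m arctan_deriv_poly_sum_Suc_eq poly_monom)
  finally show ?thesis by simp
qed

section \<open>Cotangent sums over shifted arguments\<close>

lemma sum_inverse_one_minus_root_powers:
  fixes w \<zeta> :: "'a::field"
  assumes \<zeta>_n: "\<zeta> ^ n = 1" and \<zeta>_primitive: "\<And>j. 0 < j \<Longrightarrow> j < n \<Longrightarrow> \<zeta> ^ j \<noteq> 1"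
    and w_n: "w ^ n \<noteq> 1"
  shows "(\<Sum>i<n. 1 / (1 - w * \<zeta> ^ i)) = of_nat n / (1 - w ^ n)"
proof -
  have n: "n \<noteq> 0"
    using w_n by (metis power_0)
  have root_power: "(\<zeta> ^ i) ^ n = 1" for i
    by (metis \<zeta>_n mult.commute power_mult power_one)
  then have power_n: "(w * \<zeta> ^ i) ^ n = w ^ n" for i
    by (simp add: power_mult_distrib)
  have "1 / (1 - w * \<zeta> ^ i) = (\<Sum>j<n. (w * \<zeta> ^ i) ^ j) / (1 - w ^ n)" for i
  proof -
    have "w * \<zeta> ^ i \<noteq> 1"
      using power_n [of i] w_n by force
    moreover from this have "(\<Sum>j<n. (w * \<zeta> ^ i) ^ j) = (1 - w ^ n) / (1 - w * \<zeta> ^ i)"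
      by (simp add: sum_gp_strict power_n)
    ultimately show ?thesis
      using w_n by (simp add: field_simps)
  qed
  then have "(\<Sum>i<n. 1 / (1 - w * \<zeta> ^ i)) = (\<Sum>i<n. \<Sum>j<n. (w * \<zeta> ^ i) ^ j) / (1 - w ^ n)"
    by (simp add: sum_divide_distrib)
  also have "(\<Sum>i<n. \<Sum>j<n. (w * \<zeta> ^ i) ^ j) = (\<Sum>j<n. w ^ j * (\<Sum>i<n. (\<zeta> ^ j) ^ i))"
    by (subst sum.swap) (simp add: power_mult_distrib sum_distrib_left mult.commute flip: power_mult)
  also have "\<dots> = (\<Sum>j<n. if j = 0 then of_nat n else 0)"
  proof (rule sum.cong [OF refl])
    fix j assume "j \<in> {..<n}"
    then show "w ^ j * (\<Sum>i<n. (\<zeta> ^ j) ^ i) = (if j = 0 then of_nat n else 0)"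
      using \<zeta>_primitive [of j] root_power [of j] by (simp add: sum_gp_strict)
  qed
  also have "\<dots> = of_nat n"
    using n by simp
  finally show ?thesis .
qed

lemma cot_eq_exp:
  fixes \<theta> :: real
  assumes "sin \<theta> \<noteq> 0"
  shows "exp (2 * \<i> * of_real \<theta>) \<noteq> 1"
    and "complex_of_real (cot \<theta>) = \<i> * (1 - 2 / (1 - exp (2 * \<i> * of_real \<theta>)))"
proof -
  define e where "e = exp (\<i> * of_real \<theta>)"
  have e: "e \<noteq> 0" "exp (2 * \<i> * of_real \<theta>) = e * e"
    by (simp_all add: e_def mult.assoc flip: exp_add)
  have cos_e: "complex_of_real (cos \<theta>) = (e * e + 1) / (2 * e)"
    using cos_exp_eq [of "of_real \<theta>"] e by (simp add: cos_of_real e_def exp_minus field_simps)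
  have sin_e: "complex_of_real (sin \<theta>) = (e * e - 1) / (2 * \<i> * e)"
    using sin_exp_eq [of "of_real \<theta>"] e by (simp add: sin_of_real e_def exp_minus field_simps)
  have ee: "e * e \<noteq> 1"
    using assms sin_e by auto
  then show "exp (2 * \<i> * of_real \<theta>) \<noteq> 1"
    using e by simp
  have "complex_of_real (cot \<theta>) = complex_of_real (cos \<theta>) / complex_of_real (sin \<theta>)"
    by (simp add: cot_def)
  also have "\<dots> = \<i> * (1 - 2 / (1 - e * e))"
    unfolding cos_e sin_e using e ee by (simp add: field_simps)
  finally show "complex_of_real (cot \<theta>) = \<i> * (1 - 2 / (1 - exp (2 * \<i> * of_real \<theta>)))"
    using e by simp
qed

lemma sin_shift_div_nonzero:
  assumes "sin \<alpha> \<noteq> 0" "n \<ge> 1"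
  shows "sin ((\<alpha> + real i * pi) / real n) \<noteq> 0"
proof
  assume "sin ((\<alpha> + real i * pi) / real n) = 0"
  then obtain k :: int where "(\<alpha> + real i * pi) / real n = of_int k * pi"
    by (auto simp: sin_zero_iff_int2)
  then have "\<alpha> = of_int (k * int n - int i) * pi"
    using assms(2) by (simp add: field_simps)
  with assms(1) show False
    by (metis sin_zero_iff_int2)
qed

lemma sum_cot_shifts:
  assumes "n \<ge> 1" "sin \<alpha> \<noteq> 0"
  shows "(\<Sum>i<n. cot ((\<alpha> + real i * pi) / real n)) = real n * cot \<alpha>"
proof -
  define w where "w = exp (2 * \<i> * complex_of_real (\<alpha> / n))"
  define \<zeta> where "\<zeta> = exp (2 * \<i> * complex_of_real (pi / n))"
  have exp_shift: "exp (2 * \<i> * complex_of_real ((\<alpha> + real i * pi) / real n)) = w * \<zeta> ^ i" for i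
  proof -
    have "2 * \<i> * complex_of_real ((\<alpha> + real i * pi) / real n)
        = 2 * \<i> * complex_of_real (\<alpha> / n) + of_nat i * (2 * \<i> * complex_of_real (pi / n))"
      by (simp add: add_divide_distrib algebra_simps)
    then show ?thesis
      unfolding w_def \<zeta>_def by (simp only: exp_add exp_of_nat_mult)
  qed
  have w_n: "w ^ n = exp (2 * \<i> * complex_of_real \<alpha>)"
    unfolding w_def exp_of_nat_mult [symmetric] using assms(1) by (simp add: field_simps)
  have \<zeta>_power: "\<zeta> ^ j = 1 \<longleftrightarrow> n dvd j" for j
  proof -
    have "\<zeta> ^ j = exp (2 * of_real pi * \<i> * of_nat j / of_nat n)"
      unfolding \<zeta>_def exp_of_nat_mult [symmetric] by (simp add: field_simps)
    then show ?thesis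
      using complex_root_unity_eq_1 [OF assms(1)] by simp
  qed
  have w_n_ne_1: "w ^ n \<noteq> 1"
    using cot_eq_exp(1) [OF assms(2)] w_n by simp
  have "complex_of_real (\<Sum>i<n. cot ((\<alpha> + real i * pi) / real n))
      = (\<Sum>i<n. \<i> * (1 - 2 / (1 - w * \<zeta> ^ i)))"
    unfolding of_real_sum
    using cot_eq_exp(2) [OF sin_shift_div_nonzero [OF assms(2,1)]] exp_shift by simp
  also have "\<dots> = \<i> * (of_nat n - 2 * (\<Sum>i<n. 1 / (1 - w * \<zeta> ^ i)))"
    by (simp add: sum_subtractf sum_distrib_left right_diff_distrib)
  also have "\<dots> = of_nat n * (\<i> * (1 - 2 / (1 - w ^ n)))"
  proof -
    have S: "(\<Sum>i<n. 1 / (1 - w * \<zeta> ^ i)) = of_nat n / (1 - w ^ n)"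
      by (rule sum_inverse_one_minus_root_powers) (use \<zeta>_power w_n_ne_1 in \<open>auto dest: dvd_imp_le\<close>)
    show ?thesis
      unfolding S using w_n_ne_1 by (simp add: field_simps)
  qed
  also have "\<dots> = complex_of_real (real n * cot \<alpha>)"
    using cot_eq_exp(2) [OF assms(2)] w_n by simp
  finally show ?thesis
    by (simp only: of_real_eq_iff)
qed

lemma DERIV_poly_cot:
  assumes "sin x \<noteq> 0"
  shows "DERIV (\<lambda>x. poly p (cot x)) x :> - poly ([:1, 0, 1:] * pderiv p) (cot x)"
proof -
  have "inverse ((sin x)\<^sup>2) = 1 + cot x * cot x"
    using assms sin_cos_squared_add [of x] by (simp add: cot_def field_simps power2_eq_square)
  then have "poly (pderiv p) (cot x) * - inverse ((sin x)\<^sup>2) = - poly ([:1, 0, 1:] * pderiv p) (cot x)"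
    by (simp add: algebra_simps)
  then show ?thesis
    using DERIV_chain2 [OF poly_DERIV DERIV_cot [OF assms], of p] by simp
qed

lemma sum_deriv_poly_cot_shifts:
  assumes n: "n \<ge> 1" and "sin \<alpha> \<noteq> 0"
  shows "(\<Sum>i<n. poly (deriv_poly j) (cot ((\<alpha> + real i * pi) / real n)))
    = real n ^ Suc j * poly (deriv_poly j) (cot \<alpha>)"
  using assms(2)
proof (induction j arbitrary: \<alpha>)
  case 0
  then show ?case
    using sum_cot_shifts [OF n] by simp
next
  case (Suc j)
  define S where "S = {x::real. sin x \<noteq> 0}"
  have "open S"
    unfolding S_def by (rule open_Collect_neq) (auto intro!: continuous_intros)
  have shift_deriv: "DERIV (\<lambda>x. poly (deriv_poly j) (cot ((x + real i * pi) / real n))) \<alpha>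
      :> - poly (deriv_poly (Suc j)) (cot ((\<alpha> + real i * pi) / real n)) / real n" for i
  proof -
    have "DERIV (\<lambda>x. (x + real i * pi) / real n) \<alpha> :> 1 / real n"
      using n by (auto intro!: derivative_eq_intros)
    from DERIV_chain2 [OF DERIV_poly_cot [OF sin_shift_div_nonzero [OF Suc.prems n, of i]] this]
    show ?thesis by simp
  qed
  have "DERIV (\<lambda>x. real n ^ Suc j * poly (deriv_poly j) (cot x)) \<alpha>
      :> (\<Sum>i<n. - poly (deriv_poly (Suc j)) (cot ((\<alpha> + real i * pi) / real n)) / real n)"
  proof (rule has_field_derivative_transform_within_open [OF DERIV_sum \<open>open S\<close>])
    show "\<alpha> \<in> S" using Suc.prems by (simp add: S_def)
  qed (use shift_deriv Suc.IH in \<open>auto simp: S_def\<close>)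
  moreover have "DERIV (\<lambda>x. real n ^ Suc j * poly (deriv_poly j) (cot x)) \<alpha>
      :> real n ^ Suc j * - poly (deriv_poly (Suc j)) (cot \<alpha>)"
    using DERIV_cmult [OF DERIV_poly_cot [OF Suc.prems, of "deriv_poly j"]] by simp
  ultimately have "(\<Sum>i<n. - poly (deriv_poly (Suc j)) (cot ((\<alpha> + real i * pi) / real n)) / real n)
      = real n ^ Suc j * - poly (deriv_poly (Suc j)) (cot \<alpha>)"
    by (rule DERIV_unique)
  then show ?case
    using n by (simp add: sum_negf sum_divide_distrib [symmetric] field_simps del: deriv_poly.simps)
qed

theorem corollary6p3:
  fixes m n :: nat and \<alpha> :: real
  assumes "m \<ge> 1" and "n \<ge> 2" and "\<forall>j::int. \<alpha> \<noteq> of_int j * pi"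
  shows "(\<Sum>k<n. cot ((\<alpha> + real k * pi) / real n) ^ m)
    = (if even m then (-1) ^ (m div 2) * real n else 0)
      + 1 / fact (m - 1) * (\<Sum>k=1..m. real n ^ k * arctan_number m k * poly (deriv_poly (k - 1)) (cot \<alpha>))"
proof -
  have n: "n \<ge> 1"
    using assms(2) by simp
  have sin_\<alpha>: "sin \<alpha> \<noteq> 0"
    using assms(3) by (auto simp: sin_zero_iff_int2)
  let ?cot = "\<lambda>k. cot ((\<alpha> + real k * pi) / real n)"
  have "(\<Sum>k<n. ?cot k ^ m)
      = (\<Sum>k<n. even_sign m + (\<Sum>j=1..m. arctan_number m j * poly (deriv_poly (j - 1)) (?cot k)) / fact (m - 1))"
    by (simp only: power_eq_arctan_deriv_poly_sum [OF assms(1)])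
  also have "\<dots> = real n * even_sign m
      + (\<Sum>j=1..m. arctan_number m j * (\<Sum>k<n. poly (deriv_poly (j - 1)) (?cot k))) / fact (m - 1)"
    by (simp add: sum.distrib sum_divide_distrib [symmetric] sum_distrib_left sum.swap [where A = "{..<n}"])
  also have "\<dots> = real n * even_sign m
      + (\<Sum>j=1..m. arctan_number m j * (real n ^ j * poly (deriv_poly (j - 1)) (cot \<alpha>))) / fact (m - 1)"
  proof -
    have "(\<Sum>k<n. poly (deriv_poly (j - 1)) (?cot k)) = real n ^ j * poly (deriv_poly (j - 1)) (cot \<alpha>)"
      if "j \<in> {1..m}" for j
    proof -
      from that have "Suc (j - 1) = j" by simp
      with sum_deriv_poly_cot_shifts [OF n sin_\<alpha>, of "j - 1"] show ?thesis by simp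
    qed
    then show ?thesis by simp
  qed
  finally show ?thesis
    by (simp add: even_sign_def mult_ac)
qed

end
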